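(* Let $N=\{A,B,C,D,E\}$. The formal dual of the linear form $$Q=I(A;B\mid C)+I(A;B\mid D)+I(C;D)-I(A;B)+I(A;B\mid E)+I(A;E\mid B)+I(B;E\mid A)$$ is the linear form $$Q^\perp=I(C;D\mid AE)+I(C;D\mid BE)+I(A;B\mid E)-I(C;D\mid E)+I(A;B\mid CD)+I(A;E\mid CD)+I(B;E\mid CD).$$ Moreover, for $0<\varepsilon<1/4$ let $(A,B,C,D,E)$ be binary random variables with joint distribution giving probability $\varepsilon$ to each of the tuples $(0,0,0,0,0),(0,1,1,0,0),(1,0,0,1,0),(1,1,0,0,0)$ and probability $1/4-\varepsilon$ to each of $(0,0,0,0,1),(0,1,0,0,1),(1,0,0,0,1),(1,1,0,0,1)$ (listed as $(A,B,C,D,E)$). Then, evaluated on the entropic vector of this distribution, $Q^\perp<0$ for all sufficiently small $\varepsilon>0$. In particular $Q^\perp\ge 0$ is not a valid information inequality.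
   Context: For random variables, $I(X;Y\mid Z)=H(XZ)+H(YZ)-H(XYZ)-H(Z)$ is conditional mutual information ($H$ Shannon entropy, juxtaposition denotes joint variables, $I(X;Y)=I(X;Y\mid\varnothing)$); the same expression defines a linear form on vectors $h$ indexed by subsets of $N$ (with $h(\varnothing)=0$). The dual of $h$ is $h^\perp(J)=h(N\setminus J)-h(N)+\sum_{j\in J}h(\{j\})$, and the formal dual of a linear form $c$ is the linear form $h\mapsto c(h^\perp)$. (The inequality $Q\ge 0$ is a known valid non-Shannon information inequality.) *)

theory Defs
  imports Complex_Main
begin

datatype var = VA | VB | VC | VD | VE

type_synonym vec = "var set \<Rightarrow> real"
type_synonym linform = "vec \<Rightarrow> real"

definition CMI :: "var set \<Rightarrow> var set \<Rightarrow> var set \<Rightarrow> linform" where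
  "CMI X Y Z h = h (X \<union> Z) + h (Y \<union> Z) - h (X \<union> Y \<union> Z) - h Z"

definition MI :: "var set \<Rightarrow> var set \<Rightarrow> linform" where
  "MI X Y = CMI X Y {}"

definition dualvec :: "vec \<Rightarrow> vec" where
  "dualvec h J = h (UNIV - J) - h UNIV + (\<Sum>j\<in>J. h {j})"

definition formal_dual :: "linform \<Rightarrow> linform" where
  "formal_dual c = (\<lambda>h. c (dualvec h))"

definition Q :: linform where
  "Q h = CMI {VA} {VB} {VC} h + CMI {VA} {VB} {VD} h + MI {VC} {VD} h - MI {VA} {VB} h
        + CMI {VA} {VB} {VE} h + CMI {VA} {VE} {VB} h + CMI {VB} {VE} {VA} h"

definition Qperp :: linform where
  "Qperp h = CMI {VC} {VD} {VA, VE} h + CMI {VC} {VD} {VB, VE} h + CMI {VA} {VB} {VE} h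
        - CMI {VC} {VD} {VE} h + CMI {VA} {VB} {VC, VD} h + CMI {VA} {VE} {VC, VD} h
        + CMI {VB} {VE} {VC, VD} h"

text \<open>Joint outcomes are assignments var \<Rightarrow> nat; a finite distribution is given by a
  finite support set Om and a probability mass function p on it.
  Shannon entropy (natural log; the base does not affect signs) of the marginal on S.\<close>
definition proj :: "var set \<Rightarrow> (var \<Rightarrow> nat) \<Rightarrow> (var \<Rightarrow> nat)" where
  "proj S x = (\<lambda>v. if v \<in> S then x v else 0)"

definition marg :: "((var \<Rightarrow> nat) \<Rightarrow> real) \<Rightarrow> (var \<Rightarrow> nat) set \<Rightarrow> var set \<Rightarrow> (var \<Rightarrow> nat) \<Rightarrow> real" where
  "marg p Om S y = (\<Sum>x\<in>{x\<in>Om. proj S x = y}. p x)"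

definition entvec :: "((var \<Rightarrow> nat) \<Rightarrow> real) \<Rightarrow> (var \<Rightarrow> nat) set \<Rightarrow> vec" where
  "entvec p Om S = - (\<Sum>y\<in>proj S ` Om. marg p Om S y * ln (marg p Om S y))"

definition pt :: "nat \<Rightarrow> nat \<Rightarrow> nat \<Rightarrow> nat \<Rightarrow> nat \<Rightarrow> var \<Rightarrow> nat" where
  "pt a b c d e = (\<lambda>v. case v of VA \<Rightarrow> a | VB \<Rightarrow> b | VC \<Rightarrow> c | VD \<Rightarrow> d | VE \<Rightarrow> e)"

definition Om0 :: "(var \<Rightarrow> nat) set" where
  "Om0 = {pt 0 0 0 0 0, pt 0 1 1 0 0, pt 1 0 0 1 0, pt 1 1 0 0 0,
          pt 0 0 0 0 1, pt 0 1 0 0 1, pt 1 0 0 0 1, pt 1 1 0 0 1}"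

definition peps :: "real \<Rightarrow> (var \<Rightarrow> nat) \<Rightarrow> real" where
  "peps \<epsilon> x = (if x \<in> {pt 0 0 0 0 0, pt 0 1 1 0 0, pt 1 0 0 1 0, pt 1 1 0 0 0} then \<epsilon>
               else if x \<in> {pt 0 0 0 0 1, pt 0 1 0 0 1, pt 1 0 0 0 1, pt 1 1 0 0 1} then 1/4 - \<epsilon>
               else 0)"

end

theory Submission
  imports Defs
begin

(* Both the duality and the closed form of Qperp on the given distribution are finite
   computations; the content is in the sign. On that distribution
   Qperp = F(eps) - eps (10 ln 2 - 6 ln 3), where F(eps) / (1 - 2 eps) is the Kullback-Leibler
   divergence of (1/4, 1/4, 1/4 - eps, 1/4 - eps) / (1 - 2 eps) from the uniform distribution.
   Bounding it by the chi-square divergence (ln x <= x - 1) gives F(eps) = O(eps^2), while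
   3^3 < 2^5 makes the linear coefficient positive. *)

definition var_set :: "bool \<Rightarrow> bool \<Rightarrow> bool \<Rightarrow> bool \<Rightarrow> bool \<Rightarrow> var set" where
  "var_set a b c d e = {v. case v of VA \<Rightarrow> a | VB \<Rightarrow> b | VC \<Rightarrow> c | VD \<Rightarrow> d | VE \<Rightarrow> e}"

lemma var_set_mem: "var_set (VA \<in> S) (VB \<in> S) (VC \<in> S) (VD \<in> S) (VE \<in> S) = S"
  unfolding var_set_def by (auto split: var.splits)

lemma UNIV_var: "(UNIV :: var set) = {VA, VB, VC, VD, VE}"
  using var.exhaust by auto

(* Rewriting every h S to hh (VA \<in> S) ... (VE \<in> S) puts all subsets in a canonical form, so that
   identities between linear forms become identities between 32 free real variables. *)
lemma formal_dual_Q: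
  assumes "h {} = 0"
  shows "formal_dual Q h = Qperp h"
proof -
  define hh where "hh a b c d e = h (var_set a b c d e)" for a b c d e
  have canon: "h S = hh (VA \<in> S) (VB \<in> S) (VC \<in> S) (VD \<in> S) (VE \<in> S)" for S
    unfolding hh_def var_set_mem ..
  have "hh False False False False False = 0"
    using assms canon[of "{}"] by simp
  then show ?thesis
    unfolding formal_dual_def Q_def Qperp_def MI_def CMI_def dualvec_def UNIV_var
    by (simp only: canon) simp
qed

lemma Qperp_expand:
  "Qperp h = h {VA, VC, VE} + h {VA, VD, VE} - 2 * h {VA, VC, VD, VE}
     + h {VB, VC, VE} + h {VB, VD, VE} - 2 * h {VB, VC, VD, VE}
     - h {VA, VB, VE} - h {VC, VE} - h {VD, VE} + 3 * h {VC, VD, VE}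
     + 2 * h {VA, VC, VD} + 2 * h {VB, VC, VD} - h {VA, VB, VC, VD} - 3 * h {VC, VD}"
proof -
  define hh where "hh a b c d e = h (var_set a b c d e)" for a b c d e
  have canon: "h S = hh (VA \<in> S) (VB \<in> S) (VC \<in> S) (VD \<in> S) (VE \<in> S)" for S
    unfolding hh_def var_set_mem ..
  show ?thesis
    unfolding Qperp_def CMI_def by (simp only: canon) simp
qed

definition xlnx :: "real \<Rightarrow> real" where
  "xlnx x = x * ln x"

lemma xlnx_mult: "0 < x \<Longrightarrow> 0 < y \<Longrightarrow> xlnx (x * y) = x * y * ln x + x * xlnx y"
  unfolding xlnx_def by (simp add: ln_mult algebra_simps)

lemma pt_eq_iff: "pt a b c d e = pt a' b' c' d' e' \<longleftrightarrow> a = a' \<and> b = b' \<and> c = c' \<and> d = d' \<and> e = e'"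
  unfolding pt_def by (auto simp: fun_eq_iff split: var.splits)

lemma proj_pt:
  "proj S (pt a b c d e) = pt (if VA \<in> S then a else 0) (if VB \<in> S then b else 0)
     (if VC \<in> S then c else 0) (if VD \<in> S then d else 0) (if VE \<in> S then e else 0)"
  unfolding proj_def pt_def by (auto simp: fun_eq_iff split: var.splits)

lemma marg_eq_sum_if: "finite Om \<Longrightarrow> marg p Om S y = (\<Sum>x\<in>Om. if proj S x = y then p x else 0)"
  unfolding marg_def by (simp add: sum.inter_filter)

lemma peps_pt:
  "peps \<epsilon> (pt a b c d e) =
     (if (a, b, c, d, e) \<in> {(0, 0, 0, 0, 0), (0, 1, 1, 0, 0), (1, 0, 0, 1, 0), (1, 1, 0, 0, 0)} then \<epsilon>
      else if (a, b, c, d, e) \<in> {(0, 0, 0, 0, 1), (0, 1, 0, 0, 1), (1, 0, 0, 0, 1), (1, 1, 0, 0, 1)}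
      then 1/4 - \<epsilon> else 0)"
  unfolding peps_def by (simp add: pt_eq_iff)

lemmas entvec_peps_simps =
  entvec_def marg_eq_sum_if Om0_def proj_pt pt_eq_iff peps_pt sum.insert_if xlnx_def

lemma entvec_peps:
  fixes e :: real
  defines "h \<equiv> entvec (peps e) Om0"
  shows "h {VA, VC, VE} = - (2 * xlnx e + xlnx (2 * e) + 2 * xlnx (1/2 - 2 * e))"
    and "h {VA, VD, VE} = - (2 * xlnx e + xlnx (2 * e) + 2 * xlnx (1/2 - 2 * e))"
    and "h {VB, VC, VE} = - (2 * xlnx e + xlnx (2 * e) + 2 * xlnx (1/2 - 2 * e))"
    and "h {VB, VD, VE} = - (2 * xlnx e + xlnx (2 * e) + 2 * xlnx (1/2 - 2 * e))"
    and "h {VA, VC, VD, VE} = - (4 * xlnx e + 2 * xlnx (1/2 - 2 * e))"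
    and "h {VB, VC, VD, VE} = - (4 * xlnx e + 2 * xlnx (1/2 - 2 * e))"
    and "h {VA, VB, VE} = - (4 * xlnx e + 4 * xlnx (1/4 - e))"
    and "h {VC, VE} = - (xlnx (3 * e) + xlnx e + xlnx (1 - 4 * e))"
    and "h {VD, VE} = - (xlnx (3 * e) + xlnx e + xlnx (1 - 4 * e))"
    and "h {VC, VD, VE} = - (xlnx (2 * e) + 2 * xlnx e + xlnx (1 - 4 * e))"
    and "h {VA, VC, VD} = - (2 * xlnx (1/2 - e) + 2 * xlnx e)"
    and "h {VB, VC, VD} = - (2 * xlnx (1/2 - e) + 2 * xlnx e)"
    and "h {VA, VB, VC, VD} = - (2 * xlnx (1/4) + 2 * xlnx e + 2 * xlnx (1/4 - e))"
    and "h {VC, VD} = - (xlnx (1 - 2 * e) + 2 * xlnx e)"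
  unfolding h_def by (simp_all add: entvec_peps_simps)

lemma Qperp_entvec_peps:
  assumes "0 < e" "e < 1/4"
  shows "Qperp (entvec (peps e) Om0) =
           2 * xlnx (1/4) + 2 * xlnx (1/4 - e) + 2 * (1 - 2 * e) * ln 2 - xlnx (1 - 2 * e)
           - e * (10 * ln 2 - 6 * ln 3)"
proof -
  have ln4: "ln (4 :: real) = 2 * ln 2"
    using ln_mult[of 2 2] by simp
  have "xlnx (2 * e) = 2 * e * ln 2 + 2 * xlnx e"
    using xlnx_mult[of 2 e] assms by simp
  moreover have "xlnx (3 * e) = 3 * e * ln 3 + 3 * xlnx e"
    using xlnx_mult[of 3 e] assms by simp
  moreover have "xlnx (1 - 4 * e) = 4 * (1/4 - e) * (2 * ln 2) + 4 * xlnx (1/4 - e)"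
    using xlnx_mult[of 4 "1/4 - e"] assms ln4 by (simp add: algebra_simps)
  moreover have "xlnx (1/2 - e) = 1/2 * xlnx (1 - 2 * e) - (1/2 - e) * ln 2"
    using xlnx_mult[of "1/2" "1 - 2 * e"] assms by (simp add: ln_div algebra_simps)
  ultimately show ?thesis
    unfolding Qperp_expand entvec_peps by (simp add: algebra_simps)
qed

lemma mult_ln_div_le:
  fixes p q :: real
  shows "0 < p \<Longrightarrow> 0 < q \<Longrightarrow> p * ln (p / q) \<le> p\<^sup>2 / q - p"
  using mult_left_mono[OF ln_le_minus_one[of "p / q"], of p]
  by (simp add: power2_eq_square right_diff_distrib)

(* The left-hand side is sum_i p_i ln (p_i / q) for p = (1/4, 1/4, 1/4 - e, 1/4 - e) and
   q = (1 - 2 e) / 4; the right-hand side is the matching chi-square sum sum_i p_i^2 / q - p_i. *)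
lemma divergence_term_le:
  assumes "0 < e" "e < 1/4"
  shows "2 * xlnx (1/4) + 2 * xlnx (1/4 - e) + 2 * (1 - 2 * e) * ln 2 - xlnx (1 - 2 * e)
           \<le> 4 * e\<^sup>2 / (1 - 2 * e)"
proof -
  define q where "q = (1 - 2 * e) / 4"
  have q: "0 < q" using assms q_def by simp
  have term_le: "xlnx p - p * ln q \<le> p\<^sup>2 / q - p" if "0 < p" for p
    using mult_ln_div_le[OF that q] that q by (simp add: xlnx_def ln_div right_diff_distrib)
  have four_q: "1 - 2 * e = 4 * q" unfolding q_def by simp
  then have "ln (1 - 2 * e) = 2 * ln 2 + ln q"
    using q ln_mult[of 4 q] ln_mult[of 2 2] by simp
  then have "2 * xlnx (1/4) + 2 * xlnx (1/4 - e) + 2 * (1 - 2 * e) * ln 2 - xlnx (1 - 2 * e)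
      = 2 * (xlnx (1/4) - 1/4 * ln q) + 2 * (xlnx (1/4 - e) - (1/4 - e) * ln q)"
    unfolding xlnx_def by (simp add: algebra_simps)
  also have "\<dots> \<le> 2 * ((1/4)\<^sup>2 / q - 1/4) + 2 * ((1/4 - e)\<^sup>2 / q - (1/4 - e))"
    using term_le[of "1/4"] term_le[of "1/4 - e"] assms by simp
  also have "\<dots> = 4 * e\<^sup>2 / (1 - 2 * e)"
    using q four_q by (simp add: field_simps power2_eq_square) algebra
  finally show ?thesis .
qed

lemma six_ln3_lt_ten_ln2: "6 * ln 3 < 10 * ln (2 :: real)"
proof -
  have "ln (27 :: real) < ln 32" by simp
  moreover have "ln (27 :: real) = 3 * ln 3" using ln_realpow[of 3 3] by simp
  moreover have "ln (32 :: real) = 5 * ln 2" using ln_realpow[of 2 5] by simp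
  ultimately show ?thesis by simp
qed

theorem mainTheorem6:
  shows "(\<forall>h::vec. h {} = 0 \<longrightarrow> formal_dual Q h = Qperp h)
       \<and> (\<exists>\<epsilon>0>0. \<forall>\<epsilon>::real. 0 < \<epsilon> \<and> \<epsilon> < 1/4 \<and> \<epsilon> < \<epsilon>0 \<longrightarrow> Qperp (entvec (peps \<epsilon>) Om0) < 0)"
proof (intro conjI allI impI)
  fix h :: vec
  assume "h {} = 0"
  then show "formal_dual Q h = Qperp h" by (rule formal_dual_Q)
next
  define c where "c = 10 * ln 2 - 6 * ln (3 :: real)"
  have "c > 0" unfolding c_def using six_ln3_lt_ten_ln2 by simp
  then show "\<exists>\<epsilon>0>0. \<forall>\<epsilon>::real. 0 < \<epsilon> \<and> \<epsilon> < 1/4 \<and> \<epsilon> < \<epsilon>0 \<longrightarrow> Qperp (entvec (peps \<epsilon>) Om0) < 0"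
  proof (intro exI[of _ "c / 8"] conjI allI impI)
    fix e :: real
    assume e: "0 < e \<and> e < 1/4 \<and> e < c / 8"
    have "4 * e\<^sup>2 / (1 - 2 * e) \<le> 4 * e\<^sup>2 / (1/2)"
      using e by (intro divide_left_mono) auto
    also have "\<dots> < e * c"
      using e by (simp add: power2_eq_square)
    finally show "Qperp (entvec (peps e) Om0) < 0"
      using Qperp_entvec_peps[of e] divergence_term_le[of e] e unfolding c_def by linarith
  qed simp
qed

end
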